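(* Let $H$ be an abelian group with an alternating $\mathbb{Z}$-bilinear form $\langle-,-\rangle$, and let $f:H^{(1)}\to\mathbb{Z}$ be a function such that $f(u+v)=f(u)+f(v)$ for all $u,v\in H^{(1)}$ with $\langle u,v\rangle\neq0$. Then $f(u+v)=f(u)+f(v)$ for all $u,v\in H^{(1)}$ with $u+v\in H^{(1)}$, and $f(nu)=nf(u)$ for all $u\in H^{(1)}$ and $n\in\mathbb{Z}\setminus\{0\}$.
   Context: $\mu:H\to\mathrm{Hom}_{\mathbb{Z}}(H,\mathbb{Z})$, $\mu(x)(y)=\langle x,y\rangle$; $H^{(1)}:=H\setminus\ker\mu$. *)

theory Defs
  imports Main
begin

definition zmul :: "int \<Rightarrow> 'a::ab_group_add \<Rightarrow> 'a" where
  "zmul n u = (if 0 \<le> n then (((+) u) ^^ nat n) 0 else - ((((+) u) ^^ nat (- n)) 0))"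

definition alt_bilinear :: "('a::ab_group_add \<Rightarrow> 'a \<Rightarrow> int) \<Rightarrow> bool" where
  "alt_bilinear B \<longleftrightarrow>
     (\<forall>x y z. B (x + y) z = B x z + B y z) \<and>
     (\<forall>x y z. B x (y + z) = B x y + B x z) \<and>
     (\<forall>x. B x x = 0)"

text \<open>H^(1) = H minus ker mu, where mu(x)(y) = B x y.\<close>
definition H1 :: "('a \<Rightarrow> 'a \<Rightarrow> int) \<Rightarrow> 'a set" where
  "H1 B = {x. \<exists>y. B x y \<noteq> 0}"

end

theory Submission
  imports Defs
begin

text \<open>
  If \<open>\<langle>u,v\<rangle> = 0\<close> but \<open>u\<close>, \<open>v\<close>, \<open>u + v\<close> all lie in \<open>H1 B\<close>, pick \<open>w\<close> with
  \<open>\<langle>u,w\<rangle>\<close>, \<open>\<langle>v,w\<rangle>\<close> and \<open>\<langle>u+v,w\<rangle>\<close> all nonzero; such a \<open>w\<close> exists because three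
  homomorphisms \<open>H \<rightarrow> \<int>\<close> that are not identically zero have a common non-root.
  Then \<open>f(u+v) + f w = f(u+v+w) = f u + f(v+w) = f u + f v + f w\<close>, each step pairing
  two non-orthogonal elements. Negation is handled in the same way via \<open>-u + (u+w)\<close>,
  and \<open>f(n u) = n f(u)\<close> follows by induction, since \<open>n u\<close> stays in \<open>H1 B\<close>.
\<close>

lemma ex_common_nonzero:
  fixes a b :: "'a::ab_group_add \<Rightarrow> int"
  assumes a_add: "\<And>x y. a (x + y) = a x + a y" and b_add: "\<And>x y. b (x + y) = b x + b y"
    and "a x \<noteq> 0" and "b y \<noteq> 0"
  shows "\<exists>w. a w \<noteq> 0 \<and> b w \<noteq> 0"
proof (cases "b x = 0 \<and> a y = 0")
  case True
  then have "a (x + y) \<noteq> 0" "b (x + y) \<noteq> 0" using assms by simp_all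
  then show ?thesis by blast
qed (use assms(3,4) in blast)

lemma ex_common_nonzero_with_sum:
  fixes a b :: "'a::ab_group_add \<Rightarrow> int"
  assumes a_add: "\<And>x y. a (x + y) = a x + a y" and b_add: "\<And>x y. b (x + y) = b x + b y"
    and "a x \<noteq> 0" and "b y \<noteq> 0" and z: "a z + b z \<noteq> 0"
  shows "\<exists>w. a w \<noteq> 0 \<and> b w \<noteq> 0 \<and> a w + b w \<noteq> 0"
proof -
  obtain w where w: "a w \<noteq> 0" "b w \<noteq> 0"
    using ex_common_nonzero[OF a_add b_add assms(3,4)] by blast
  show ?thesis
  proof (cases "a w + b w = 0")
    case True
    \<comment> \<open>\<open>a + b\<close> vanishes at \<open>w\<close>, so it is nonzero at all of \<open>z, w + z, w + w + z\<close>,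
        while \<open>a\<close> and \<open>b\<close> can each vanish at no more than one of them.\<close>
    have sums: "a (w + z) = a w + a z" "b (w + z) = b w + b z"
      "a (w + w + z) = a w + a w + a z" "b (w + w + z) = b w + b w + b z"
      by (simp_all add: a_add b_add)
    have "(a z \<noteq> 0 \<and> b z \<noteq> 0 \<and> a z + b z \<noteq> 0) \<or>
          (a (w + z) \<noteq> 0 \<and> b (w + z) \<noteq> 0 \<and> a (w + z) + b (w + z) \<noteq> 0) \<or>
          (a (w + w + z) \<noteq> 0 \<and> b (w + w + z) \<noteq> 0 \<and> a (w + w + z) + b (w + w + z) \<noteq> 0)"
      unfolding sums using True w z by arith
    then show ?thesis by blast
  next
    case False
    then show ?thesis using w by blast
  qed
qed

locale alt_form =
  fixes B :: "'a::ab_group_add \<Rightarrow> 'a \<Rightarrow> int"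
  assumes alt_bilinear: "alt_bilinear B"
begin

lemma add_left: "B (x + y) z = B x z + B y z"
  and add_right: "B x (y + z) = B x y + B x z"
  and self_zero: "B x x = 0"
  using alt_bilinear unfolding alt_bilinear_def by auto

lemma antisym: "B x y = - B y x"
  using self_zero[of "x + y"] add_left[of x y "x + y"] add_right[of x x y] add_right[of y x y]
    self_zero[of x] self_zero[of y]
  by linarith

lemma zero_left: "B 0 y = 0"
  using add_left[of 0 0 y] by simp

lemma minus_left: "B (- x) y = - B x y"
  using add_left[of x "- x" y] by (simp add: zero_left)

lemma iter_add_left: "B (((+) u ^^ m) 0) y = int m * B u y"
  by (induction m) (simp_all add: zero_left add_left algebra_simps)

lemma H1I: "B x y \<noteq> 0 \<Longrightarrow> x \<in> H1 B"
  unfolding H1_def by blast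

lemma H1I_right: "B x y \<noteq> 0 \<Longrightarrow> y \<in> H1 B"
  using H1I[of y x] by (simp add: antisym[of y x])

lemma H1E:
  assumes "x \<in> H1 B"
  obtains y where "B x y \<noteq> 0"
  using assms unfolding H1_def by blast

lemma iter_add_in_H1: "u \<in> H1 B \<Longrightarrow> m \<noteq> 0 \<Longrightarrow> ((+) u ^^ m) 0 \<in> H1 B"
  by (auto elim!: H1E intro: H1I simp: iter_add_left)

end

locale additive_on_nonorthogonal = alt_form B
  for B :: "'a::ab_group_add \<Rightarrow> 'a \<Rightarrow> int" +
  fixes f :: "'a \<Rightarrow> int"
  assumes add_nonorthogonal:
    "\<And>u v. u \<in> H1 B \<Longrightarrow> v \<in> H1 B \<Longrightarrow> B u v \<noteq> 0 \<Longrightarrow> f (u + v) = f u + f v"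
begin

lemma add:
  assumes u: "u \<in> H1 B" and v: "v \<in> H1 B" and uv: "u + v \<in> H1 B"
  shows "f (u + v) = f u + f v"
proof (cases "B u v = 0")
  case orth: True
  obtain x y z where x: "B u x \<noteq> 0" and y: "B v y \<noteq> 0" and z: "B (u + v) z \<noteq> 0"
    using u v uv by (meson H1E)
  have "B u z + B v z \<noteq> 0" using z by (simp add: add_left)
  then obtain w where w: "B u w \<noteq> 0" "B v w \<noteq> 0" "B u w + B v w \<noteq> 0"
    using ex_common_nonzero_with_sum[where a = "B u" and b = "B v", OF add_right add_right x y]
    by blast
  have w_H1: "w \<in> H1 B" using w(1) by (rule H1I_right)
  have vw_H1: "v + w \<in> H1 B" using orth w(1) by (intro H1I_right[of u]) (simp add: add_right)
  have "f (u + v) + f w = f (u + v + w)"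
    using add_nonorthogonal[OF uv w_H1] w by (simp add: add_left)
  also have "\<dots> = f u + f (v + w)"
    using add_nonorthogonal[OF u vw_H1] orth w by (simp add: add_right add.assoc)
  also have "\<dots> = f u + f v + f w"
    using add_nonorthogonal[OF v w_H1] w by simp
  finally show ?thesis by simp
qed (use u v add_nonorthogonal in blast)

lemma minus:
  assumes x: "x \<in> H1 B"
  shows "f (- x) = - f x"
proof -
  obtain w where w: "B x w \<noteq> 0" using x by (rule H1E)
  have w_H1: "w \<in> H1 B" using w by (rule H1I_right)
  have mx_H1: "- x \<in> H1 B" using w by (intro H1I[of _ w]) (simp add: minus_left)
  have xw_H1: "x + w \<in> H1 B" using w by (intro H1I_right[of x]) (simp add: add_right self_zero)
  have "f w = f (- x) + f (x + w)"
    using add_nonorthogonal[OF mx_H1 xw_H1] w by (simp add: minus_left add_right self_zero)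
  also have "\<dots> = f (- x) + f x + f w"
    using add_nonorthogonal[OF x w_H1] w by simp
  finally show ?thesis by simp
qed

lemma iter_add:
  assumes u: "u \<in> H1 B" and m: "m \<noteq> 0"
  shows "f (((+) u ^^ m) 0) = int m * f u"
  using m
proof (induction m)
  case (Suc m)
  show ?case
  proof (cases "m = 0")
    case False
    have "f (((+) u ^^ Suc m) 0) = f (u + ((+) u ^^ m) 0)" by simp
    also have "\<dots> = f u + f (((+) u ^^ m) 0)"
      using iter_add_in_H1[OF u, of "Suc m"]
      by (intro add[OF u iter_add_in_H1[OF u False]]) simp
    also have "\<dots> = int (Suc m) * f u" using Suc.IH False by (simp add: distrib_right)
    finally show ?thesis .
  qed simp
qed simp

lemma zmul:
  assumes "u \<in> H1 B" and "n \<noteq> 0"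
  shows "f (zmul n u) = n * f u"
  using assms by (simp add: zmul_def iter_add minus iter_add_in_H1)

end

theorem lemma5p3:
  fixes B :: "'a::ab_group_add \<Rightarrow> 'a \<Rightarrow> int" and f :: "'a \<Rightarrow> int"
  assumes "alt_bilinear B"
    and "\<And>u v. u \<in> H1 B \<Longrightarrow> v \<in> H1 B \<Longrightarrow> B u v \<noteq> 0 \<Longrightarrow> f (u + v) = f u + f v"
  shows "(\<forall>u v. u \<in> H1 B \<longrightarrow> v \<in> H1 B \<longrightarrow> u + v \<in> H1 B \<longrightarrow> f (u + v) = f u + f v) \<and>
         (\<forall>u n. u \<in> H1 B \<longrightarrow> n \<noteq> 0 \<longrightarrow> f (zmul n u) = n * f u)"
proof -
  interpret additive_on_nonorthogonal B f
    using assms by unfold_locales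
  show ?thesis using add zmul by blast
qed

end
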